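(* In the setting of the context, suppose the step-size satisfies $\alpha\in(0,\overline{\alpha})$, where $$\overline{\alpha}=\min\left\{\frac{\sqrt{\Delta^2+4ns(1-\sigma)^2cd\epsilon l^2yy_-^2(l+ns)}-\Delta}{2cd\epsilon l^2yy_-^2(l+ns)},\ \frac{1}{nl}\right\},\qquad \Delta=nscd\epsilon ly_-(1-\sigma+\tau).$$ Then for all $k\ge0$: (a) with $\Gamma_1=\frac{1}{\gamma_1}\sqrt{(\alpha ly_-T)^2+(\alpha yl+2)^2(d\epsilon ly_-^2T)^2}\in(0,\infty)$ we have $\|H_k\|_2=\Gamma_1\gamma_1^k$; (b) there exist $0<\gamma_2<1$ and $0<\Gamma_2<\infty$ such that $\|G^k\|_2\le\Gamma_2\gamma_2^k$; (c) with $\gamma=\max\{\gamma_1,\gamma_2\}$ and $\Gamma=\Gamma_1\Gamma_2/\gamma$, for all $0\le r\le k-1$, $\|G^{k-r-1}H_r\|_2\le\Gamma\gamma^k$.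
   Context: Let $n,p\ge1$, $\mathcal{G}$ a strongly-connected directed graph on $\{1,\dots,n\}$, $\underline{A}=(a_{ij})\in\mathbb{R}^{n\times n}$ with $a_{ij}>0$ if $i$ is an out-neighbor of $j$ or $i=j$, $a_{ij}=0$ otherwise, and columns summing to $1$; $A=\underline{A}\otimes I_p$, $A_\infty=\lim_kA^k$; $\mathbf{y}_k=\underline{A}^k\mathbf{1}_n$, $Y_k=\mathrm{diag}(\mathbf{y}_k)\otimes I_p$, $Y_\infty=\lim_kY_k$. Let $l,s>0$ be the Lipschitz-gradient and strong-convexity constants of differentiable local functions $f_i:\mathbb{R}^p\to\mathbb{R}$ (i.e. $\|\nabla f_i(\mathbf{z}_1)-\nabla f_i(\mathbf{z}_2)\|_2\le l\|\mathbf{z}_1-\mathbf{z}_2\|_2$ and $f_i(\mathbf{z}_1)-f_i(\mathbf{z}_2)\le\nabla f_i(\mathbf{z}_1)^\top(\mathbf{z}_1-\mathbf{z}_2)-\frac s2\|\mathbf{z}_1-\mathbf{z}_2\|_2^2$). Constants: $\tau=\|A-I_{np}\|_2$, $\epsilon=\|I_{np}-A_\infty\|_2$, $\eta=\max(|1-n\alpha l|,|1-n\alpha s|)$, $y=\sup_k\|Y_k\|_2$, $y_-=\sup_k\|Y_k^{-1}\|_2$; $\gamma_1\in(0,1)$, $T\in(0,\infty)$ are constants with $\|Y_k-Y_\infty\|_2\le T\gamma_1^k$ for all $k\ge0$; $|||\cdot|||$ is a matrix norm on $\mathbb{R}^{np\times np}$ with compatible vector norm $\|\cdot\|$ such that $\sigma:=|||A-A_\infty|||<1$;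 $c,d>0$ satisfy $\|\mathbf{v}\|_2\le c\|\mathbf{v}\|$ and $\|\mathbf{v}\|\le d\|\mathbf{v}\|_2$. Matrices: $$G=\begin{bmatrix}\sigma&0&\alpha\\ \alpha cly_-&\eta&0\\ cd\epsilon ly_-(\tau+\alpha lyy_-)&\alpha d\epsilon l^2yy_-&\sigma+\alpha cd\epsilon ly_-\end{bmatrix},\quad H_k=\begin{bmatrix}0&0&0\\ \alpha ly_-T\gamma_1^{k-1}&0&0\\ (\alpha ly+2)d\epsilon ly_-^2T\gamma_1^{k-1}&0&0\end{bmatrix}.$$ $\|\cdot\|_2$ on matrices is the spectral norm. *)

theory Defs
  imports "HOL-Analysis.Analysis"
begin

definition spec_norm :: "real^'n^'n \<Rightarrow> real" where
  "spec_norm M = onorm (\<lambda>x. M *v x)"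

primrec matpow :: "real^'n^'n \<Rightarrow> nat \<Rightarrow> real^'n^'n" where
  "matpow M 0 = mat 1"
| "matpow M (Suc k) = M ** matpow M k"

definition eta_const :: "nat \<Rightarrow> real \<Rightarrow> real \<Rightarrow> real \<Rightarrow> real" where
  "eta_const n \<alpha> l s = max \<bar>1 - real n * \<alpha> * l\<bar> \<bar>1 - real n * \<alpha> * s\<bar>"

text \<open>The 3x3 matrix G (rows listed top to bottom); ym stands for y_-.\<close>
definition Gmat :: "nat \<Rightarrow> real \<Rightarrow> real \<Rightarrow> real \<Rightarrow> real \<Rightarrow> real \<Rightarrow> real \<Rightarrow> real
    \<Rightarrow> real \<Rightarrow> real \<Rightarrow> real \<Rightarrow> real^3^3" where
  "Gmat n \<alpha> l s \<sigma> \<tau> \<epsilon> y ym c d = vector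
     [vector [\<sigma>, 0, \<alpha>],
      vector [\<alpha> * c * l * ym, eta_const n \<alpha> l s, 0],
      vector [c * d * \<epsilon> * l * ym * (\<tau> + \<alpha> * l * y * ym),
              \<alpha> * d * \<epsilon> * l^2 * y * ym,
              \<sigma> + \<alpha> * c * d * \<epsilon> * l * ym]]"

text \<open>The 3x3 matrix H_k; gamma1^(k-1) is written gamma1^k / gamma1 so that H_0 is
  also covered (k >= 0 in the paper).\<close>
definition Hmat :: "real \<Rightarrow> real \<Rightarrow> real \<Rightarrow> real \<Rightarrow> real \<Rightarrow> real \<Rightarrow> real \<Rightarrow> real
    \<Rightarrow> nat \<Rightarrow> real^3^3" where
  "Hmat \<alpha> l y ym \<epsilon> d T \<gamma>1 k = vector
     [vector [0, 0, 0],
      vector [\<alpha> * l * ym * T * (\<gamma>1^k / \<gamma>1), 0, 0],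
      vector [(\<alpha> * l * y + 2) * d * \<epsilon> * l * ym^2 * T * (\<gamma>1^k / \<gamma>1), 0, 0]]"

definition Delta_const :: "nat \<Rightarrow> real \<Rightarrow> real \<Rightarrow> real \<Rightarrow> real \<Rightarrow> real \<Rightarrow> real \<Rightarrow> real \<Rightarrow> real \<Rightarrow> real" where
  "Delta_const n s c d \<epsilon> l ym \<sigma> \<tau> = real n * s * c * d * \<epsilon> * l * ym * (1 - \<sigma> + \<tau>)"

definition alpha_bar :: "nat \<Rightarrow> real \<Rightarrow> real \<Rightarrow> real \<Rightarrow> real \<Rightarrow> real \<Rightarrow> real \<Rightarrow> real
    \<Rightarrow> real \<Rightarrow> real \<Rightarrow> real" where
  "alpha_bar n l s \<sigma> \<tau> \<epsilon> y ym c d =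
     (let \<Delta> = Delta_const n s c d \<epsilon> l ym \<sigma> \<tau>;
          q = c * d * \<epsilon> * l^2 * y * ym^2 * (l + real n * s)
      in min ((sqrt (\<Delta>^2 + 4 * real n * s * (1 - \<sigma>)^2 * q) - \<Delta>) / (2 * q))
             (1 / (real n * l)))"

end

theory Submission imports Defs begin

text \<open>
  \<open>G\<close> has nonnegative entries, so a Perron-type argument applies: if some positive vector
  \<open>v\<close> satisfies \<open>G v < v\<close> componentwise, then \<open>G v \<le> \<rho> v\<close> for some \<open>\<rho> < 1\<close>, hence
  \<open>|G\<^sup>k x| \<le> \<rho>\<^sup>k (\<parallel>x\<parallel> / min v) v\<close> componentwise, which bounds \<open>\<parallel>G\<^sup>k\<parallel>\<^sub>2\<close> geometrically.
  For the lower-triangular-plus-corner shape of \<open>G\<close> such a \<open>v = (1, w, x)\<close> exists iff a single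
  inequality between the entries holds; after clearing the denominator \<open>n s\<close> it becomes
  \<open>q \<alpha>\<^sup>2 + \<Delta> \<alpha> < n s (1 - \<sigma>)\<^sup>2\<close>, i.e. \<open>\<alpha>\<close> lies below the positive root that defines
  \<open>alpha_bar\<close>. The bound \<open>\<alpha> < 1/(n l)\<close> together with \<open>s \<le> l\<close> makes \<open>\<eta> = 1 - n \<alpha> s \<in> [0,1)\<close>.
  Each \<open>H\<^sub>k\<close> has a single nonzero column, so its spectral norm is the length of that column,
  and part (c) follows by submultiplicativity.
\<close>

lemma spec_norm_nonneg: "0 \<le> spec_norm (M :: real^'n^'n)"
  unfolding spec_norm_def by (rule onorm_pos_le[OF matrix_vector_mul_bounded_linear])

lemma spec_norm_matrix_mul_le:
  fixes A B :: "real^'n^'n"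
  shows "spec_norm (A ** B) \<le> spec_norm A * spec_norm B"
proof -
  have "(\<lambda>x. (A ** B) *v x) = (\<lambda>x. A *v x) \<circ> (\<lambda>x. B *v x)"
    by (auto simp: matrix_vector_mul_assoc)
  then show ?thesis unfolding spec_norm_def
    by (metis onorm_compose matrix_vector_mul_bounded_linear)
qed

lemma spec_norm_single_column:
  fixes u :: "real^'n" and j :: 'n
  shows "spec_norm (\<chi> i k. if k = j then u$i else 0) = norm u"
proof -
  define M :: "real^'n^'n" where "M = (\<chi> i k. if k = j then u$i else 0)"
  have Mx: "M *v x = x$j *\<^sub>R u" for x
    by (simp add: M_def vec_eq_iff matrix_vector_mult_def if_distrib[of "\<lambda>a. a * _"] cong: if_cong)
  show ?thesis unfolding M_def[symmetric] spec_norm_def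
  proof (rule antisym)
    show "onorm ((*v) M) \<le> norm u"
    proof (rule onorm_le)
      fix x :: "real^'n"
      have "norm (M *v x) = \<bar>x$j\<bar> * norm u" by (simp add: Mx)
      also have "\<dots> \<le> norm x * norm u"
        by (intro mult_right_mono component_le_norm_cart) auto
      finally show "norm (M *v x) \<le> norm u * norm x" by (simp add: mult.commute)
    qed
    have "norm (M *v axis j 1) \<le> onorm ((*v) M) * norm (axis j 1 :: real^'n)"
      by (rule onorm) simp
    then show "norm u \<le> onorm ((*v) M)" by (simp add: Mx)
  qed
qed

lemma abs_nonneg_matrix_mulv_le:
  fixes G :: "real^'n^'n" and v z :: "real^'n"
  assumes "\<forall>i j. 0 \<le> G$i$j" and "\<forall>i. (G *v v)$i \<le> \<rho> * v$i"
    and "\<forall>i. \<bar>z$i\<bar> \<le> m * v$i" and "m \<ge> 0"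
  shows "\<bar>(G *v z)$i\<bar> \<le> \<rho> * m * v$i"
proof -
  have "\<bar>(G *v z)$i\<bar> = \<bar>\<Sum>j\<in>UNIV. G$i$j * z$j\<bar>" by (simp add: matrix_vector_mult_def)
  also have "\<dots> \<le> (\<Sum>j\<in>UNIV. \<bar>G$i$j * z$j\<bar>)" by (rule sum_abs)
  also have "\<dots> \<le> (\<Sum>j\<in>UNIV. G$i$j * (m * v$j))"
    by (rule sum_mono) (simp add: abs_mult assms(1,3) mult_left_mono)
  also have "\<dots> = m * (G *v v)$i"
    by (simp add: matrix_vector_mult_def sum_distrib_left algebra_simps)
  also have "\<dots> \<le> m * (\<rho> * v$i)" using assms by (simp add: mult_left_mono)
  finally show ?thesis by (simp add: algebra_simps)
qed

lemma spec_norm_matpow_le_of_subinvariant: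
  fixes G :: "real^'n^'n" and v :: "real^'n"
  assumes nonneg: "\<forall>i j. 0 \<le> G$i$j" and sub: "\<forall>i. (G *v v)$i \<le> \<rho> * v$i"
    and "\<rho> \<ge> 0" and lo: "\<forall>i. vlo \<le> v$i" "vlo > 0" and hi: "\<forall>i. v$i \<le> vhi"
  shows "spec_norm (matpow G k) \<le> (real CARD('n) * vhi / vlo) * \<rho>^k"
proof -
  have comp: "\<forall>i. \<bar>(matpow G k *v x)$i\<bar> \<le> \<rho>^k * (norm x / vlo) * v$i" for x
  proof (induction k)
    case 0
    have "\<bar>x$i\<bar> \<le> (norm x / vlo) * v$i" for i
    proof -
      have "\<bar>x$i\<bar> \<le> (norm x / vlo) * vlo" using lo component_le_norm_cart by simp
      also have "\<dots> \<le> (norm x / vlo) * v$i" using lo by (intro mult_left_mono) auto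
      finally show ?thesis .
    qed
    then show ?case by simp
  next
    case (Suc k)
    have "\<bar>(G *v (matpow G k *v x))$i\<bar> \<le> \<rho> * (\<rho>^k * (norm x / vlo)) * v$i" for i
      by (rule abs_nonneg_matrix_mulv_le[OF nonneg sub]) (use Suc assms in auto)
    moreover have "matpow G (Suc k) *v x = G *v (matpow G k *v x)"
      by (simp add: matrix_vector_mul_assoc)
    ultimately show ?case by (simp add: mult_ac)
  qed
  show ?thesis unfolding spec_norm_def
  proof (rule onorm_le)
    fix x
    have "norm (matpow G k *v x) \<le> (\<Sum>i\<in>UNIV. \<bar>(matpow G k *v x)$i\<bar>)" by (rule norm_le_l1_cart)
    also have "\<dots> \<le> (\<Sum>i\<in>(UNIV::'n set). \<rho>^k * (norm x / vlo) * vhi)"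
      using comp[of x] hi assms(3) lo
      by (intro sum_mono) (meson order_trans mult_left_mono zero_le_divide_iff norm_ge_zero
          less_imp_le zero_le_power mult_nonneg_nonneg)
    also have "\<dots> = (real CARD('n) * vhi / vlo) * \<rho>^k * norm x" by simp
    finally show "norm (matpow G k *v x) \<le> (real CARD('n) * vhi / vlo) * \<rho>^k * norm x" .
  qed
qed

lemma matpow_geometric_decay_of_contraction_vector:
  fixes G :: "real^'n^'n" and v :: "real^'n"
  assumes nonneg: "\<forall>i j. 0 \<le> G$i$j" and pos: "\<forall>i. 0 < v$i"
    and contr: "\<forall>i. (G *v v)$i < v$i"
  shows "\<exists>\<gamma> \<Gamma>. 0 < \<gamma> \<and> \<gamma> < 1 \<and> 0 < \<Gamma> \<and> (\<forall>k. spec_norm (matpow G k) \<le> \<Gamma> * \<gamma>^k)"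
proof -
  define \<rho> where "\<rho> = max (1/2) (Max (range (\<lambda>i. (G *v v)$i / v$i)))"
  define vlo where "vlo = Min (range (($) v))"
  define vhi where "vhi = Max (range (($) v))"
  have "(G *v v)$i / v$i < 1" for i using pos contr by simp
  then have "\<rho> < 1" by (simp add: \<rho>_def)
  have sub: "\<forall>i. (G *v v)$i \<le> \<rho> * v$i"
  proof
    fix i
    have "(G *v v)$i / v$i \<le> \<rho>" unfolding \<rho>_def by (rule max.coboundedI2) simp
    then show "(G *v v)$i \<le> \<rho> * v$i" using pos by (simp add: divide_le_eq)
  qed
  have "vlo > 0" and lo: "\<forall>i. vlo \<le> v$i" and hi: "\<forall>i. v$i \<le> vhi"
    using pos by (simp_all add: vlo_def vhi_def)
  have "vhi > 0" using pos hi by (meson order_less_le_trans)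
  define \<Gamma> where "\<Gamma> = real CARD('n) * vhi / vlo"
  have "\<Gamma> > 0" using \<open>vlo > 0\<close> \<open>vhi > 0\<close> by (simp add: \<Gamma>_def)
  have "\<rho> > 0" by (simp add: \<rho>_def)
  have "spec_norm (matpow G k) \<le> \<Gamma> * \<rho>^k" for k
    unfolding \<Gamma>_def using \<open>\<rho> > 0\<close>
    by (intro spec_norm_matpow_le_of_subinvariant[OF nonneg sub _ lo \<open>vlo > 0\<close> hi]) simp
  then show ?thesis using \<open>\<rho> > 0\<close> \<open>\<rho> < 1\<close> \<open>\<Gamma> > 0\<close> by blast
qed

lemma contraction_vector_3x3:
  fixes G :: "real^3^3"
  assumes nonneg: "\<forall>i j. 0 \<le> G$i$j" and zero: "G$1$2 = 0" "G$2$3 = 0"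
    and diag: "G$1$1 < 1" "G$2$2 < 1" and corner: "0 < G$1$3"
    and feasible: "G$1$3 * (G$3$1 + G$3$2 * (G$2$1 / (1 - G$2$2))) < (1 - G$1$1) * (1 - G$3$3)"
  shows "\<exists>v. (\<forall>i. 0 < v$i) \<and> (\<forall>i. (G *v v)$i < v$i)"
proof -
  txt \<open>With \<open>v = (1, w, x)\<close>, row 2 asks for \<open>w > w0\<close>, row 1 bounds \<open>x\<close> from above and row 3
    from below; \<open>feasible\<close> says the two bounds on \<open>x\<close> are compatible for \<open>w\<close> slightly above \<open>w0\<close>.\<close>
  define w0 where "w0 = G$2$1 / (1 - G$2$2)"
  have "w0 \<ge> 0" using nonneg diag by (simp add: w0_def)
  define D where "D = (1 - G$1$1) * (1 - G$3$3) - G$1$3 * (G$3$1 + G$3$2 * w0)"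
  have "D > 0" using feasible by (simp add: D_def w0_def)
  have "0 \<le> G$1$3 * G$3$2" using nonneg corner by simp
  define \<delta> where "\<delta> = D / (2 * (G$1$3 * G$3$2 + 1))"
  have "\<delta> > 0" using \<open>D > 0\<close> \<open>0 \<le> G$1$3 * G$3$2\<close> by (simp add: \<delta>_def)
  have "G$1$3 * G$3$2 * \<delta> < D"
    using \<open>D > 0\<close> \<open>0 \<le> G$1$3 * G$3$2\<close> by (simp add: \<delta>_def field_simps add_pos_nonneg)
  define w where "w = w0 + \<delta>"
  have "w0 < w" using \<open>\<delta> > 0\<close> by (simp add: w_def)
  have w_feasible: "G$1$3 * (G$3$1 + G$3$2 * w) < (1 - G$1$1) * (1 - G$3$3)"
    using \<open>G$1$3 * G$3$2 * \<delta> < D\<close> by (simp add: w_def D_def algebra_simps)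
  define L where "L = (G$3$1 + G$3$2 * w) / (1 - G$3$3)"
  have "0 \<le> G$1$3 * (G$3$1 + G$3$2 * w)" using nonneg \<open>w0 \<ge> 0\<close> \<open>w0 < w\<close> by simp
  then have "0 < (1 - G$1$1) * (1 - G$3$3)" using w_feasible by linarith
  then have "G$3$3 < 1" using diag by (simp add: zero_less_mult_iff)
  then have "L \<ge> 0" using nonneg \<open>w0 \<ge> 0\<close> \<open>w0 < w\<close> by (simp add: L_def)
  have "L < (1 - G$1$1) / G$1$3"
    using w_feasible \<open>G$3$3 < 1\<close> corner by (simp add: L_def field_simps)
  then obtain x where "L < x" and "x < (1 - G$1$1) / G$1$3" using dense by blast
  define v :: "real^3" where "v = vector [1, w, x]"
  have "(G *v v)$1 < v$1"
    using \<open>x < (1 - G$1$1) / G$1$3\<close> zero corner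
    by (simp add: v_def matrix_vector_mult_def sum_3 field_simps)
  moreover have "(G *v v)$2 < v$2"
    using \<open>w0 < w\<close> zero diag by (simp add: v_def matrix_vector_mult_def sum_3 w0_def field_simps)
  moreover have "(G *v v)$3 < v$3"
    using \<open>L < x\<close> \<open>G$3$3 < 1\<close> by (simp add: v_def matrix_vector_mult_def sum_3 L_def field_simps)
  moreover have "\<forall>i. 0 < v$i" using \<open>w0 \<ge> 0\<close> \<open>w0 < w\<close> \<open>L \<ge> 0\<close> \<open>L < x\<close>
    by (simp add: v_def forall_3)
  ultimately show ?thesis unfolding forall_3 by blast
qed

lemma spec_norm_matpow_mul_le_geometric:
  fixes G :: "real^'n^'n" and H :: "nat \<Rightarrow> real^'n^'n"
  assumes G: "\<forall>m. spec_norm (matpow G m) \<le> \<Gamma>2 * \<gamma>2^m" and H: "\<forall>r. spec_norm (H r) \<le> \<Gamma>1 * \<gamma>1^r"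
    and "0 \<le> \<Gamma>1" "0 \<le> \<Gamma>2" "0 < \<gamma>1" "0 < \<gamma>2" and "r + 1 \<le> k"
  shows "spec_norm (matpow G (k - r - 1) ** H r) \<le> \<Gamma>1 * \<Gamma>2 / max \<gamma>1 \<gamma>2 * (max \<gamma>1 \<gamma>2)^k"
proof -
  define m where "m = k - r - 1"
  define \<gamma> where "\<gamma> = max \<gamma>1 \<gamma>2"
  have "\<gamma> > 0" using assms by (simp add: \<gamma>_def)
  have "spec_norm (matpow G m ** H r) \<le> spec_norm (matpow G m) * spec_norm (H r)"
    by (rule spec_norm_matrix_mul_le)
  also have "\<dots> \<le> (\<Gamma>2 * \<gamma>2^m) * (\<Gamma>1 * \<gamma>1^r)"
    using G H assms by (intro mult_mono spec_norm_nonneg) auto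
  also have "\<dots> \<le> (\<Gamma>2 * \<gamma>^m) * (\<Gamma>1 * \<gamma>^r)"
    using assms by (intro mult_mono mult_left_mono power_mono) (auto simp: \<gamma>_def)
  also have "\<dots> = \<Gamma>1 * \<Gamma>2 / \<gamma> * \<gamma>^k"
  proof -
    have "k = Suc (m + r)" using \<open>r + 1 \<le> k\<close> by (simp add: m_def)
    then show ?thesis using \<open>\<gamma> > 0\<close> by (simp add: power_add field_simps)
  qed
  finally show ?thesis by (simp add: m_def \<gamma>_def)
qed

lemma strong_convexity_le_lipschitz:
  fixes f :: "'a::euclidean_space \<Rightarrow> real" and g :: "'a \<Rightarrow> 'a"
  assumes conv: "\<forall>z1 z2. f z1 - f z2 \<le> g z1 \<bullet> (z1 - z2) - s / 2 * (norm (z1 - z2))^2"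
    and lip: "\<forall>z1 z2. norm (g z1 - g z2) \<le> l * norm (z1 - z2)"
  shows "s \<le> l"
proof -
  obtain z :: 'a where "z \<noteq> 0" using nonzero_Basis nonempty_Basis by blast
  have "s * (norm z)^2 \<le> (g z - g 0) \<bullet> z"
    using conv[rule_format, of z 0] conv[rule_format, of 0 z] by (simp add: inner_diff_left)
  also have "\<dots> \<le> norm (g z - g 0) * norm z" by (rule norm_cauchy_schwarz)
  also have "\<dots> \<le> l * norm z * norm z"
    using lip[rule_format, of z 0] by (intro mult_right_mono) simp_all
  also have "\<dots> = l * (norm z)^2" by (simp add: power2_eq_square)
  finally show ?thesis using \<open>z \<noteq> 0\<close> by simp
qed

lemma less_quadratic_root:
  fixes q \<Delta> P \<alpha> :: real
  assumes "q > 0" "\<Delta> \<ge> 0" "\<alpha> \<ge> 0" and root: "\<alpha> < (sqrt (\<Delta>^2 + 4 * P * q) - \<Delta>) / (2 * q)"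
  shows "q * \<alpha>^2 + \<Delta> * \<alpha> < P"
proof -
  have lt: "2 * q * \<alpha> + \<Delta> < sqrt (\<Delta>^2 + 4 * P * q)" using root \<open>q > 0\<close> by (simp add: field_simps)
  moreover have "0 \<le> 2 * q * \<alpha> + \<Delta>" using assms by simp
  ultimately have "0 < \<Delta>^2 + 4 * P * q" by (meson le_less_trans real_sqrt_gt_0_iff)
  have "(2 * q * \<alpha> + \<Delta>)^2 < (sqrt (\<Delta>^2 + 4 * P * q))^2"
    using lt \<open>0 \<le> 2 * q * \<alpha> + \<Delta>\<close> by (rule power_strict_mono) simp
  then have "4 * q * (q * \<alpha>^2 + \<Delta> * \<alpha>) < 4 * q * P"
    using \<open>0 < \<Delta>^2 + 4 * P * q\<close> by (simp add: power2_eq_square algebra_simps)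
  then show ?thesis using \<open>q > 0\<close> by simp
qed

lemma alpha_bar_bounds:
  assumes "n \<ge> 1" "l > 0" "s > 0" "\<sigma> < 1" "\<tau> \<ge> 0" "\<epsilon> \<ge> 0" "y > 0" "ym > 0" "c > 0" "d > 0"
    and "0 < \<alpha>" and \<alpha>_less: "\<alpha> < alpha_bar n l s \<sigma> \<tau> \<epsilon> y ym c d"
  shows "0 < \<epsilon>" and "real n * \<alpha> * l < 1"
    and "c * d * \<epsilon> * l^2 * y * ym^2 * (l + real n * s) * \<alpha>^2
           + Delta_const n s c d \<epsilon> l ym \<sigma> \<tau> * \<alpha> < real n * s * (1 - \<sigma>)^2"
proof -
  define q where "q = c * d * \<epsilon> * l^2 * y * ym^2 * (l + real n * s)"
  define \<Delta> where "\<Delta> = Delta_const n s c d \<epsilon> l ym \<sigma> \<tau>"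
  have \<alpha>_root: "\<alpha> < (sqrt (\<Delta>^2 + 4 * (real n * s * (1 - \<sigma>)^2) * q) - \<Delta>) / (2 * q)"
    and \<alpha>_nl: "\<alpha> < 1 / (real n * l)"
    using \<alpha>_less by (simp_all add: alpha_bar_def Let_def q_def \<Delta>_def mult.assoc)
  show "real n * \<alpha> * l < 1" using \<alpha>_nl assms by (simp add: field_simps)
  show "0 < \<epsilon>"
  proof (rule ccontr)
    assume "\<not> 0 < \<epsilon>"
    then have "q = 0" using \<open>\<epsilon> \<ge> 0\<close> by (simp add: q_def)
    then show False using \<alpha>_root \<open>0 < \<alpha>\<close> by simp
  qed
  then have "q > 0" unfolding q_def using assms by (intro mult_pos_pos add_pos_nonneg zero_less_power) auto
  moreover have "\<Delta> \<ge> 0" using assms \<open>0 < \<epsilon>\<close> by (simp add: \<Delta>_def Delta_const_def)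
  ultimately show "q * \<alpha>^2 + \<Delta> * \<alpha> < real n * s * (1 - \<sigma>)^2"
    unfolding q_def[symmetric] \<Delta>_def[symmetric]
    using \<alpha>_root \<open>0 < \<alpha>\<close> by (intro less_quadratic_root) auto
qed

lemma Gmat_entries:
  fixes n \<alpha> l s \<sigma> \<tau> \<epsilon> y ym c d
  defines "G \<equiv> Gmat n \<alpha> l s \<sigma> \<tau> \<epsilon> y ym c d"
  shows "G$1$1 = \<sigma>" "G$1$2 = 0" "G$1$3 = \<alpha>"
    "G$2$1 = \<alpha> * c * l * ym" "G$2$2 = eta_const n \<alpha> l s" "G$2$3 = 0"
    "G$3$1 = c * d * \<epsilon> * l * ym * (\<tau> + \<alpha> * l * y * ym)"
    "G$3$2 = \<alpha> * d * \<epsilon> * l^2 * y * ym" "G$3$3 = \<sigma> + \<alpha> * c * d * \<epsilon> * l * ym"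
  by (simp_all add: G_def Gmat_def)

lemma Gmat_geometric_decay:
  assumes n: "n \<ge> 1" and l: "l > 0" and s: "s > 0" "s \<le> l" and \<sigma>: "0 \<le> \<sigma>" "\<sigma> < 1"
    and \<tau>: "\<tau> \<ge> 0" and \<epsilon>: "\<epsilon> \<ge> 0" and y: "y > 0" "ym > 0" and cd: "c > 0" "d > 0"
    and \<alpha>: "0 < \<alpha>" "\<alpha> < alpha_bar n l s \<sigma> \<tau> \<epsilon> y ym c d"
  shows "\<exists>\<gamma> \<Gamma>. 0 < \<gamma> \<and> \<gamma> < 1 \<and> 0 < \<Gamma>
           \<and> (\<forall>k. spec_norm (matpow (Gmat n \<alpha> l s \<sigma> \<tau> \<epsilon> y ym c d) k) \<le> \<Gamma> * \<gamma>^k)"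
proof -
  note bounds = alpha_bar_bounds[OF n l s(1) \<sigma>(2) \<tau> \<epsilon> y cd \<alpha>]
  define G where "G = Gmat n \<alpha> l s \<sigma> \<tau> \<epsilon> y ym c d"
  note G = Gmat_entries[of n \<alpha> l s \<sigma> \<tau> \<epsilon> y ym c d, folded G_def]
  have "real n > 0" using n by simp
  have "real n * \<alpha> * s \<le> real n * \<alpha> * l" using s \<alpha> by (intro mult_left_mono) auto
  then have "real n * \<alpha> * s < 1" using bounds(2) by linarith
  moreover have "0 < real n * \<alpha> * s" using \<open>real n > 0\<close> s \<alpha> by simp
  ultimately have \<eta>: "eta_const n \<alpha> l s = 1 - real n * \<alpha> * s"
    using \<open>real n * \<alpha> * s \<le> real n * \<alpha> * l\<close> bounds(2) by (simp add: eta_const_def)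
  have "\<forall>i j. 0 \<le> G$i$j"
    using assms bounds \<open>real n * \<alpha> * s < 1\<close> unfolding forall_3 G \<eta> by simp
  moreover have "G$1$1 < 1" "G$2$2 < 1" "0 < G$1$3"
    using assms \<open>real n > 0\<close> unfolding G \<eta> by simp_all
  moreover have "G$1$3 * (G$3$1 + G$3$2 * (G$2$1 / (1 - G$2$2))) < (1 - G$1$1) * (1 - G$3$3)"
  proof -
    define N where "N = real n * s"
    have "N > 0" using \<open>real n > 0\<close> assms by (simp add: N_def)
    have "N * ((1 - G$1$1) * (1 - G$3$3) - G$1$3 * (G$3$1 + G$3$2 * (G$2$1 / (1 - G$2$2))))
        = N * (1 - \<sigma>)^2 - (c * d * \<epsilon> * l^2 * y * ym^2 * (l + real n * s) * \<alpha>^2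
                            + Delta_const n s c d \<epsilon> l ym \<sigma> \<tau> * \<alpha>)"
      using \<open>real n > 0\<close> assms unfolding G \<eta>
      by (simp add: N_def Delta_const_def field_simps power2_eq_square)
    also have "\<dots> > 0" using bounds assms by (simp add: N_def)
    finally show ?thesis using \<open>N > 0\<close> by (simp add: zero_less_mult_iff)
  qed
  ultimately obtain v where "\<forall>i. 0 < v$i" "\<forall>i. (G *v v)$i < v$i"
    using contraction_vector_3x3 G(2,6) by blast
  then show ?thesis unfolding G_def[symmetric]
    using matpow_geometric_decay_of_contraction_vector \<open>\<forall>i j. 0 \<le> G$i$j\<close> by blast
qed

lemma spec_norm_Hmat:
  assumes "\<gamma>1 > 0"
  shows "spec_norm (Hmat \<alpha> l y ym \<epsilon> d T \<gamma>1 k)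
           = (1 / \<gamma>1) * sqrt ((\<alpha> * l * ym * T)^2 + (\<alpha> * y * l + 2)^2 * (d * \<epsilon> * l * ym^2 * T)^2)
             * \<gamma>1^k"
proof -
  define a where "a = \<alpha> * l * ym * T"
  define b where "b = (\<alpha> * y * l + 2) * (d * \<epsilon> * l * ym^2 * T)"
  define u :: "real^3" where "u = (\<gamma>1^k / \<gamma>1) *\<^sub>R vector [0, a, b]"
  have "Hmat \<alpha> l y ym \<epsilon> d T \<gamma>1 k = (\<chi> i j. if j = 1 then u$i else 0)"
    by (simp add: Hmat_def vec_eq_iff forall_3 u_def a_def b_def algebra_simps add_divide_distrib)
  moreover have "norm (vector [0, a, b] :: real^3) = sqrt (a^2 + b^2)"
    by (simp add: norm_vec_def L2_set_def sum_3)
  then have "norm u = \<gamma>1^k / \<gamma>1 * sqrt (a^2 + b^2)" using assms by (simp add: u_def)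
  ultimately show ?thesis
    by (simp add: spec_norm_single_column a_def b_def power_mult_distrib)
qed

theorem lemma5:
  fixes n :: nat
    and f :: "nat \<Rightarrow> 'p::euclidean_space \<Rightarrow> real"
    and gf :: "nat \<Rightarrow> 'p \<Rightarrow> 'p"
    and l s \<sigma> \<tau> \<epsilon> y ym \<gamma>1 T c d \<alpha> :: real
  assumes n_pos: "n \<ge> 1"
    and l_pos: "l > 0" and s_pos: "s > 0"
    and grad: "\<forall>i\<in>{1..n}. \<forall>z. (f i has_derivative (\<lambda>h. gf i z \<bullet> h)) (at z)"
    and lip: "\<forall>i\<in>{1..n}. \<forall>z1 z2. norm (gf i z1 - gf i z2) \<le> l * norm (z1 - z2)"
    and sconv: "\<forall>i\<in>{1..n}. \<forall>z1 z2.
                  f i z1 - f i z2 \<le> gf i z1 \<bullet> (z1 - z2) - s / 2 * (norm (z1 - z2))^2"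
    and sigma: "0 \<le> \<sigma>" "\<sigma> < 1"
    and tau: "\<tau> \<ge> 0" and eps: "\<epsilon> \<ge> 0"
    and y_pos: "y > 0" and ym_pos: "ym > 0"
    and gamma1: "0 < \<gamma>1" "\<gamma>1 < 1" and T_pos: "T > 0"
    and cd_pos: "c > 0" "d > 0"
    and alpha: "0 < \<alpha>" "\<alpha> < alpha_bar n l s \<sigma> \<tau> \<epsilon> y ym c d"
  shows "let \<Gamma>1 = (1 / \<gamma>1) * sqrt ((\<alpha> * l * ym * T)^2
                         + (\<alpha> * y * l + 2)^2 * (d * \<epsilon> * l * ym^2 * T)^2);
             G = Gmat n \<alpha> l s \<sigma> \<tau> \<epsilon> y ym c d;
             H = Hmat \<alpha> l y ym \<epsilon> d T \<gamma>1
         in 0 < \<Gamma>1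
          \<and> (\<forall>k. spec_norm (H k) = \<Gamma>1 * \<gamma>1^k)
          \<and> (\<exists>\<gamma>2 \<Gamma>2. 0 < \<gamma>2 \<and> \<gamma>2 < 1 \<and> 0 < \<Gamma>2
                \<and> (\<forall>k. spec_norm (matpow G k) \<le> \<Gamma>2 * \<gamma>2^k)
                \<and> (let \<gamma> = max \<gamma>1 \<gamma>2; \<Gamma> = \<Gamma>1 * \<Gamma>2 / \<gamma>
                   in \<forall>k r. r + 1 \<le> k \<longrightarrow>
                        spec_norm (matpow G (k - r - 1) ** H r) \<le> \<Gamma> * \<gamma>^k))"
proof -
  have "s \<le> l"
    using sconv lip n_pos by (intro strong_convexity_le_lipschitz[where f="f 1" and g="gf 1"]) auto
  obtain \<gamma>2 \<Gamma>2 where "0 < \<gamma>2" "\<gamma>2 < 1" "0 < \<Gamma>2"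
    and G_decay: "\<forall>k. spec_norm (matpow (Gmat n \<alpha> l s \<sigma> \<tau> \<epsilon> y ym c d) k) \<le> \<Gamma>2 * \<gamma>2^k"
    using Gmat_geometric_decay[OF n_pos l_pos s_pos \<open>s \<le> l\<close> sigma tau eps y_pos ym_pos cd_pos alpha]
    by blast
  define \<Gamma>1 where "\<Gamma>1 = (1 / \<gamma>1) * sqrt ((\<alpha> * l * ym * T)^2
                         + (\<alpha> * y * l + 2)^2 * (d * \<epsilon> * l * ym^2 * T)^2)"
  have "0 < (\<alpha> * l * ym * T)^2" using alpha l_pos ym_pos T_pos by simp
  then have "0 < \<Gamma>1" using gamma1 by (simp add: \<Gamma>1_def add_pos_nonneg)
  have H_norm: "\<forall>k. spec_norm (Hmat \<alpha> l y ym \<epsilon> d T \<gamma>1 k) = \<Gamma>1 * \<gamma>1^k"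
    using spec_norm_Hmat gamma1(1) by (simp add: \<Gamma>1_def)
  have "\<forall>k r. r + 1 \<le> k \<longrightarrow>
          spec_norm (matpow (Gmat n \<alpha> l s \<sigma> \<tau> \<epsilon> y ym c d) (k - r - 1) ** Hmat \<alpha> l y ym \<epsilon> d T \<gamma>1 r)
            \<le> \<Gamma>1 * \<Gamma>2 / max \<gamma>1 \<gamma>2 * (max \<gamma>1 \<gamma>2)^k"
    using G_decay H_norm \<open>0 < \<Gamma>1\<close> \<open>0 < \<Gamma>2\<close> \<open>0 < \<gamma>2\<close> gamma1(1)
    by (intro allI impI spec_norm_matpow_mul_le_geometric) auto
  then show ?thesis unfolding Let_def \<Gamma>1_def[symmetric]
    using \<open>0 < \<Gamma>1\<close> H_norm \<open>0 < \<gamma>2\<close> \<open>\<gamma>2 < 1\<close> \<open>0 < \<Gamma>2\<close> G_decay by blast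
qed

end
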